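(* Let $O_{(4,1)}(x,y,z,w)=x^4z^2w^2+y^4x^2w^2+z^4x^2y^2+w^4y^2z^2-4x^2y^2z^2w^2$, and let $F$ be a real form of degree $8$ in $x,y,z,w$ with $0\le F\le O_{(4,1)}$ pointwise on $\mathbb R^4$. Let $\gamma_{x,3}(y,z,w)$ be the coefficient of $x^3$ in $F$, viewed as a polynomial in $x$ with coefficients in $\mathbb R[y,z,w]$. Then $\gamma_{x,3}$ contains none of the monomials $y^3w^2,y^3zw,y^3z^2,y^2w^3,y^2z^2w,y^2z^3,yzw^3,z^3w^2,z^2w^3$; in fact there are $q_{11},q_{12},q_{13}\in\mathbb R$ with $$\gamma_{x,3}(y,z,w)=yzw\,(q_{11}z^2+q_{12}zw+q_{13}yw),$$ so that $\gamma_{x,3}$ has only the monomials $y^2zw^2$, $yz^3w$, $yz^2w^2$. *)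

theory Defs
  imports Complex_Main
begin

text \<open>A real polynomial in x,y,z,w is represented by its coefficient function:
  c i j k l is the coefficient of x^i y^j z^k w^l.\<close>

definition form8 :: "(nat \<Rightarrow> nat \<Rightarrow> nat \<Rightarrow> nat \<Rightarrow> real) \<Rightarrow> bool" where
  "form8 c \<longleftrightarrow> (\<forall>i j k l. i + j + k + l \<noteq> 8 \<longrightarrow> c i j k l = 0)"

definition peval4 :: "(nat \<Rightarrow> nat \<Rightarrow> nat \<Rightarrow> nat \<Rightarrow> real) \<Rightarrow> real \<Rightarrow> real \<Rightarrow> real \<Rightarrow> real \<Rightarrow> real" where
  "peval4 c x y z w = (\<Sum>i\<le>8. \<Sum>j\<le>8. \<Sum>k\<le>8. \<Sum>l\<le>8. c i j k l * x^i * y^j * z^k * w^l)"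

definition O41 :: "real \<Rightarrow> real \<Rightarrow> real \<Rightarrow> real \<Rightarrow> real" where
  "O41 x y z w = x^4*z^2*w^2 + y^4*x^2*w^2 + z^4*x^2*y^2 + w^4*y^2*z^2 - 4*x^2*y^2*z^2*w^2"

end

theory Submission imports Defs "HOL-Computational_Algebra.Polynomial" begin

text \<open>
  Substituting \<open>(t^a, t^b, t^c, t^d)\<close> turns \<open>0 \<le> F \<le> O41\<close> into the bound
  \<open>\<bar>F(t^a, t^b, t^c, t^d)\<bar> \<le> 4 t^m\<close> on \<open>(0, 1]\<close>, where \<open>m\<close> is the least weight of the
  four positive monomials of \<open>O41\<close>; hence every coefficient of this univariate polynomial
  of degree below \<open>m\<close> vanishes. After a perturbation of the weights that separates all
  monomials of degree 8, a coefficient of \<open>F\<close> therefore vanishes as soon as some weight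
  vector puts its monomial strictly below the positive monomials of \<open>O41\<close>. Such a weight
  vector exists for every monomial \<open>x\<^sup>3 y^j z^k w^l\<close> of degree 8 except
  \<open>x\<^sup>3 y z\<^sup>3 w\<close>, \<open>x\<^sup>3 y z\<^sup>2 w\<^sup>2\<close> and \<open>x\<^sup>3 y\<^sup>2 z w\<^sup>2\<close>.
\<close>

lemma coeff_eq_0_if_poly_bounded_at_0:
  fixes p :: "real poly"
  assumes bound: "\<And>t. 0 < t \<Longrightarrow> t \<le> 1 \<Longrightarrow> \<bar>poly p t\<bar> \<le> C * t ^ k"
    and "n < k"
  shows "coeff p n = 0"
proof (rule ccontr)
  assume "coeff p n \<noteq> 0"
  define m where "m = (LEAST n. coeff p n \<noteq> 0)"
  have "coeff p m \<noteq> 0"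
    unfolding m_def by (rule LeastI) fact
  have "m \<le> n"
    unfolding m_def by (rule Least_le) fact
  have "\<forall>i<m. coeff p i = 0"
    unfolding m_def using not_less_Least by blast
  then have "monom 1 m dvd p"
    by (simp add: monom_1_dvd_iff')
  then obtain q where q: "p = monom 1 m * q" by (elim dvdE)
  have "poly q 0 \<noteq> 0"
    using q \<open>coeff p m \<noteq> 0\<close> by (simp add: poly_0_coeff_0 coeff_monom_mult)
  have "0 \<le> C"
    using bound[of 1] abs_ge_zero[of "poly p 1"] by simp
  have "\<forall>\<^sub>F t in at_right 0. \<bar>poly q t\<bar> \<le> C * t"
  proof (rule eventually_at_rightI[where b=1])
    fix t :: real assume t: "t \<in> {0<..<1}"
    have "t ^ m * \<bar>poly q t\<bar> \<le> t ^ m * (C * t ^ (k - m))"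
      using bound[of t] t q \<open>m \<le> n\<close> \<open>n < k\<close>
      by (simp add: poly_monom abs_mult mult.left_commute flip: power_add)
    then have "\<bar>poly q t\<bar> \<le> C * t ^ (k - m)"
      using t by simp
    also have "\<dots> \<le> C * t"
      using t \<open>0 \<le> C\<close> \<open>m \<le> n\<close> \<open>n < k\<close>
      by (intro mult_left_mono) (auto intro: power_decreasing[where n=1, simplified])
    finally show "\<bar>poly q t\<bar> \<le> C * t" .
  qed simp
  moreover have "((\<lambda>t. \<bar>poly q t\<bar>) \<longlongrightarrow> \<bar>poly q 0\<bar>) (at_right 0)"
    by (intro tendsto_rabs) (metis isCont_def poly_isCont filterlim_at_split)
  moreover have "((\<lambda>t. C * t) \<longlongrightarrow> C * 0) (at_right (0::real))"
    by (intro tendsto_intros)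
  ultimately have "\<bar>poly q 0\<bar> \<le> C * 0"
    by (intro tendsto_le[of "at_right 0"]) simp_all
  with \<open>poly q 0 \<noteq> 0\<close> show False by simp
qed

definition wdeg :: "nat \<Rightarrow> nat \<Rightarrow> nat \<Rightarrow> nat \<Rightarrow> nat \<Rightarrow> nat \<Rightarrow> nat \<Rightarrow> nat \<Rightarrow> nat" where
  "wdeg wx wy wz ww i j k l = wx * i + wy * j + wz * k + ww * l"

definition weighted_restriction ::
    "(nat \<Rightarrow> nat \<Rightarrow> nat \<Rightarrow> nat \<Rightarrow> real) \<Rightarrow> nat \<Rightarrow> nat \<Rightarrow> nat \<Rightarrow> nat \<Rightarrow> real poly" where
  "weighted_restriction c wx wy wz ww =
     (\<Sum>i\<le>8. \<Sum>j\<le>8. \<Sum>k\<le>8. \<Sum>l\<le>8. monom (c i j k l) (wdeg wx wy wz ww i j k l))"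

lemma poly_weighted_restriction:
  "poly (weighted_restriction c wx wy wz ww) t = peval4 c (t ^ wx) (t ^ wy) (t ^ wz) (t ^ ww)"
  by (simp add: weighted_restriction_def wdeg_def peval4_def poly_sum poly_monom power_add
      mult_ac flip: power_mult)

lemma O41_power_curve_le:
  fixes t :: real
  assumes t: "0 < t" "t \<le> 1"
    and "m \<le> wdeg wx wy wz ww 4 0 2 2" "m \<le> wdeg wx wy wz ww 2 4 0 2"
    and "m \<le> wdeg wx wy wz ww 2 2 4 0" "m \<le> wdeg wx wy wz ww 0 2 2 4"
  shows "O41 (t ^ wx) (t ^ wy) (t ^ wz) (t ^ ww) \<le> 4 * t ^ m"
proof -
  have power_le: "t ^ e \<le> t ^ m" if "m \<le> e" for e
    using t that by (intro power_decreasing) auto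
  have "O41 (t ^ wx) (t ^ wy) (t ^ wz) (t ^ ww) =
      t ^ wdeg wx wy wz ww 4 0 2 2 + t ^ wdeg wx wy wz ww 2 4 0 2
      + t ^ wdeg wx wy wz ww 2 2 4 0 + t ^ wdeg wx wy wz ww 0 2 2 4
      - 4 * t ^ wdeg wx wy wz ww 2 2 2 2"
    by (simp add: O41_def wdeg_def power_add power_mult mult_ac)
  moreover have "0 \<le> t ^ wdeg wx wy wz ww 2 2 2 2"
    using t by simp
  ultimately show ?thesis
    using power_le assms(3-6) by (smt (verit))
qed

lemma coeff_weighted_restriction_eq_0:
  assumes "\<And>x y z w. 0 \<le> peval4 c x y z w"
    and "\<And>x y z w. peval4 c x y z w \<le> O41 x y z w"
    and "n < wdeg wx wy wz ww 4 0 2 2" "n < wdeg wx wy wz ww 2 4 0 2"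
    and "n < wdeg wx wy wz ww 2 2 4 0" "n < wdeg wx wy wz ww 0 2 2 4"
  shows "coeff (weighted_restriction c wx wy wz ww) n = 0"
proof (rule coeff_eq_0_if_poly_bounded_at_0)
  fix t :: real assume "0 < t" "t \<le> 1"
  then show "\<bar>poly (weighted_restriction c wx wy wz ww) t\<bar> \<le> 4 * t ^ Suc n"
    using assms O41_power_curve_le[of t "Suc n" wx wy wz ww]
    by (simp add: poly_weighted_restriction) (smt (verit))
qed simp

lemma coeff_weighted_restriction_unique_weight:
  assumes "form8 c" and "i0 + j0 + k0 + l0 = 8"
    and unique: "\<And>i j k l. i + j + k + l = 8 \<Longrightarrow>
        wdeg wx wy wz ww i j k l = wdeg wx wy wz ww i0 j0 k0 l0 \<Longrightarrow>
        i = i0 \<and> j = j0 \<and> k = k0 \<and> l = l0"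
  shows "coeff (weighted_restriction c wx wy wz ww) (wdeg wx wy wz ww i0 j0 k0 l0) = c i0 j0 k0 l0"
proof -
  have summand: "(if wdeg wx wy wz ww i j k l = wdeg wx wy wz ww i0 j0 k0 l0 then c i j k l else 0) =
      (if l = l0 then if k = k0 then if j = j0 then if i = i0 then c i0 j0 k0 l0
       else 0 else 0 else 0 else 0)" for i j k l
    using unique[of i j k l] \<open>form8 c\<close> \<open>i0 + j0 + k0 + l0 = 8\<close>
    unfolding form8_def by auto
  show ?thesis
    using \<open>i0 + j0 + k0 + l0 = 8\<close>
    by (simp add: weighted_restriction_def coeff_sum summand sum.delta)
qed

lemma mult_add_eq_mult_add_cancel:
  fixes b q r q' r' :: nat
  assumes "r < b" "r' < b" and "b * q + r = b * q' + r'"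
  shows "q = q' \<and> r = r'"
proof -
  have "q = (b * q + r) div b" "r = (b * q + r) mod b"
       "q' = (b * q' + r') div b" "r' = (b * q' + r') mod b"
    using assms(1,2) by simp_all
  then show ?thesis
    using assms(3) by metis
qed

lemma base9_digits_eq:
  fixes i j k i' j' k' :: nat
  assumes "j < 9" "k < 9" "j' < 9" "k' < 9"
    and "81 * i + 9 * j + k = 81 * i' + 9 * j' + k'"
  shows "i = i' \<and> j = j' \<and> k = k'"
proof -
  have "9 * (9 * i + j) + k = 9 * (9 * i' + j') + k'"
    using assms(5) by simp
  then have "9 * i + j = 9 * i' + j'" "k = k'"
    using assms(2,4) mult_add_eq_mult_add_cancel by blast+
  then show ?thesis
    using assms(1,3) mult_add_eq_mult_add_cancel by blast
qed

text \<open>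
  The perturbed weight \<open>729 w + (81, 9, 1, 0)\<close> orders first by \<open>w\<close> and then by the
  base-9 number formed by the exponents of \<open>x, y, z\<close>, which is below 729 in degree 8.
\<close>

lemma wdeg_perturbed:
  "wdeg (729 * wx + 81) (729 * wy + 9) (729 * wz + 1) (729 * ww) i j k l =
     729 * wdeg wx wy wz ww i j k l + (81 * i + 9 * j + k)"
  by (simp add: wdeg_def algebra_simps)

lemma wdeg_perturbed_inj:
  assumes "i + j + k + l = 8" "i' + j' + k' + l' = 8"
    and "wdeg (729 * wx + 81) (729 * wy + 9) (729 * wz + 1) (729 * ww) i j k l =
         wdeg (729 * wx + 81) (729 * wy + 9) (729 * wz + 1) (729 * ww) i' j' k' l'"
  shows "i = i' \<and> j = j' \<and> k = k' \<and> l = l'"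
proof -
  have "81 * i + 9 * j + k < 729" "81 * i' + 9 * j' + k' < 729"
    using assms(1,2) by linarith+
  then have "81 * i + 9 * j + k = 81 * i' + 9 * j' + k'"
    using assms(3) mult_add_eq_mult_add_cancel unfolding wdeg_perturbed by blast
  then have "i = i' \<and> j = j' \<and> k = k'"
    using assms(1,2) by (intro base9_digits_eq) linarith+
  then show ?thesis
    using assms(1,2) by simp
qed

lemma wdeg_perturbed_less:
  assumes "i + j + k + l = 8" "wdeg wx wy wz ww i j k l < wdeg wx wy wz ww i' j' k' l'"
  shows "wdeg (729 * wx + 81) (729 * wy + 9) (729 * wz + 1) (729 * ww) i j k l <
         wdeg (729 * wx + 81) (729 * wy + 9) (729 * wz + 1) (729 * ww) i' j' k' l'"
proof -
  have "81 * i + 9 * j + k < 729"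
    using assms(1) by linarith
  with assms(2) show ?thesis
    unfolding wdeg_perturbed by linarith
qed

lemma coeff_eq_0_if_below_O41:
  assumes "form8 c"
    and "\<And>x y z w. 0 \<le> peval4 c x y z w"
    and "\<And>x y z w. peval4 c x y z w \<le> O41 x y z w"
    and deg: "i + j + k + l = 8"
    and "wdeg wx wy wz ww i j k l < wdeg wx wy wz ww 4 0 2 2"
    and "wdeg wx wy wz ww i j k l < wdeg wx wy wz ww 2 4 0 2"
    and "wdeg wx wy wz ww i j k l < wdeg wx wy wz ww 2 2 4 0"
    and "wdeg wx wy wz ww i j k l < wdeg wx wy wz ww 0 2 2 4"
  shows "c i j k l = 0"
proof -
  let ?c = "weighted_restriction c (729 * wx + 81) (729 * wy + 9) (729 * wz + 1) (729 * ww)"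
  let ?n = "wdeg (729 * wx + 81) (729 * wy + 9) (729 * wz + 1) (729 * ww) i j k l"
  have "coeff ?c ?n = c i j k l"
    using \<open>form8 c\<close> deg wdeg_perturbed_inj[OF _ deg]
    by (intro coeff_weighted_restriction_unique_weight) auto
  moreover have "coeff ?c ?n = 0"
    using assms by (intro coeff_weighted_restriction_eq_0 wdeg_perturbed_less)
  ultimately show ?thesis by simp
qed

theorem lemma1:
  fixes c :: "nat \<Rightarrow> nat \<Rightarrow> nat \<Rightarrow> nat \<Rightarrow> real"
  assumes "form8 c"
    and "\<And>x y z w. 0 \<le> peval4 c x y z w"
    and "\<And>x y z w. peval4 c x y z w \<le> O41 x y z w"
  shows "\<exists>q11 q12 q13 :: real. \<forall>a b d.
           c 3 a b d = (if (a, b, d) = (1, 3, 1) then q11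
                        else if (a, b, d) = (1, 2, 2) then q12
                        else if (a, b, d) = (2, 1, 2) then q13 else 0)"
proof (intro exI allI)
  fix a b d :: nat
  show "c 3 a b d = (if (a, b, d) = (1, 3, 1) then c 3 1 3 1
                     else if (a, b, d) = (1, 2, 2) then c 3 1 2 2
                     else if (a, b, d) = (2, 1, 2) then c 3 2 1 2 else 0)"
  proof (cases "a + b + d = 5")
    case False
    then show ?thesis
      using \<open>form8 c\<close> unfolding form8_def by auto
  next
    case True
    note below = coeff_eq_0_if_below_O41[OF assms]
    have "c 3 0 0 5 = 0" "c 3 0 1 4 = 0" "c 3 1 0 4 = 0"
      by (rule below[where wx=0 and wy=1 and wz=1 and ww=0]; simp add: wdeg_def)+
    moreover have "c 3 0 2 3 = 0" "c 3 0 3 2 = 0"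
      by (rule below[where wx=1 and wy=2 and wz=0 and ww=0]; simp add: wdeg_def)+
    moreover have "c 3 0 4 1 = 0" "c 3 0 5 0 = 0" "c 3 1 4 0 = 0"
      by (rule below[where wx=0 and wy=1 and wz=0 and ww=1]; simp add: wdeg_def)+
    moreover have "c 3 1 1 3 = 0" "c 3 2 0 3 = 0" "c 3 3 0 2 = 0"
      by (rule below[where wx=0 and wy=1 and wz=2 and ww=0]; simp add: wdeg_def)+
    moreover have "c 3 2 2 1 = 0"
      by (rule below[where wx=0 and wy=1 and wz=2 and ww=3]; simp add: wdeg_def)
    moreover have "c 3 2 3 0 = 0" "c 3 3 1 1 = 0" "c 3 3 2 0 = 0"
      by (rule below[where wx=0 and wy=0 and wz=1 and ww=2]; simp add: wdeg_def)+
    moreover have "c 3 4 0 1 = 0" "c 3 4 1 0 = 0" "c 3 5 0 0 = 0"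
      by (rule below[where wx=0 and wy=0 and wz=1 and ww=1]; simp add: wdeg_def)+
    moreover have "a \<in> {0, 1, 2, 3, 4, 5}" "b \<in> {0, 1, 2, 3, 4, 5}"
      using True by auto
    ultimately show ?thesis
      using True by (elim insertE emptyE; simp)
  qed
qed

end
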